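(* Let $|\psi\rangle,|\phi\rangle,|e\rangle,|f\rangle$ be unit vectors in $\mathbb{C}^2$ with $\langle e|f\rangle=0$. Then for every $\mathcal{X}\in\{\mathcal{R},\mathcal{UE},\mathcal{GE},\mathcal{C}\}$, $$\max_{\Psi\in\mathcal{X}}\left\{\frac12\langle e|\Psi(|\psi\rangle\langle\psi|)|e\rangle+\frac12\langle f|\Psi(|\phi\rangle\langle\phi|)|f\rangle\right\}=\frac12\left(1+\sqrt{1-|\langle\psi|\phi\rangle|^2}\right).$$
   Context: Channels are linear, completely positive, trace preserving maps on $\mathcal{L}(\mathbb{C}^2)$. $\mathcal{C}$ is the set of all quantum channels; $\mathcal{R}$ is the set of random unitary channels $A\mapsto\sum_xp_xU_xAU_x^\dagger$ ($\{p_x\}$ a finite probability distribution, $U_x$ unitary); $\mathcal{GE}$ is the set of entanglement breaking channels (those $\Psi$ with $(\mathrm{id}\otimes\Psi)(\rho)$ separable for every state $\rho$ on $\mathbb{C}^2\otimes\mathbb{C}^2$); $\mathcal{UE}$ is the set of unital ($\Psi(I)=I$) entanglement breaking channels. *)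

theory Defs
  imports "Jordan_Normal_Form.Schur_Decomposition"
begin

(* The complex order (HOL-Library.Complex_Order,
   imported by Jordan_Normal_Form) is used: 0 <= z iff z is real and nonnegative. *)

definition unit_vec2 :: "complex vec \<Rightarrow> bool" where
  "unit_vec2 v \<longleftrightarrow> v \<in> carrier_vec 2 \<and> v \<bullet> conjugate v = 1"

definition braket :: "complex vec \<Rightarrow> complex vec \<Rightarrow> complex" where
  "braket v w = w \<bullet> conjugate v"

definition sandwich :: "complex vec \<Rightarrow> complex mat \<Rightarrow> complex vec \<Rightarrow> complex" where
  "sandwich v M w = braket v (M *\<^sub>v w)"

definition ketbra :: "complex vec \<Rightarrow> complex vec \<Rightarrow> complex mat" where
  "ketbra v w = mat (dim_vec v) (dim_vec w) (\<lambda>(i,j). v $ i * cnj (w $ j))"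

definition psd :: "nat \<Rightarrow> complex mat \<Rightarrow> bool" where
  "psd n M \<longleftrightarrow> M \<in> carrier_mat n n \<and> (\<forall>v \<in> carrier_vec n. 0 \<le> braket v (M *\<^sub>v v))"

definition mtrace :: "complex mat \<Rightarrow> complex" where
  "mtrace M = (\<Sum>i<dim_row M. M $$ (i,i))"

definition density :: "nat \<Rightarrow> complex mat \<Rightarrow> bool" where
  "density n M \<longleftrightarrow> psd n M \<and> mtrace M = 1"

(* Kronecker product of a 2x2 and a 2x2 matrix; index (i,a) of C^2 (x) C^2 is 2*i+a *)
definition kron2 :: "complex mat \<Rightarrow> complex mat \<Rightarrow> complex mat" where
  "kron2 A B = mat 4 4 (\<lambda>(r,c). A $$ (r div 2, c div 2) * B $$ (r mod 2, c mod 2))"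

(* the (i,j)-th 2x2 block of a (2k)x(2k) matrix, viewed as an operator on C^k (x) C^2 *)
definition block2 :: "complex mat \<Rightarrow> nat \<Rightarrow> nat \<Rightarrow> complex mat" where
  "block2 M i j = mat 2 2 (\<lambda>(a,b). M $$ (2*i+a, 2*j+b))"

definition id_tensor :: "nat \<Rightarrow> (complex mat \<Rightarrow> complex mat) \<Rightarrow> complex mat \<Rightarrow> complex mat" where
  "id_tensor k \<Psi> M = mat (k*2) (k*2) (\<lambda>(r,c). \<Psi> (block2 M (r div 2) (c div 2)) $$ (r mod 2, c mod 2))"

definition linear_map2 :: "(complex mat \<Rightarrow> complex mat) \<Rightarrow> bool" where
  "linear_map2 \<Psi> \<longleftrightarrow>
     (\<forall>A \<in> carrier_mat 2 2. \<Psi> A \<in> carrier_mat 2 2) \<and>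
     (\<forall>A \<in> carrier_mat 2 2. \<forall>B \<in> carrier_mat 2 2. \<Psi> (A + B) = \<Psi> A + \<Psi> B) \<and>
     (\<forall>A \<in> carrier_mat 2 2. \<forall>c. \<Psi> (c \<cdot>\<^sub>m A) = c \<cdot>\<^sub>m \<Psi> A)"

definition completely_positive :: "(complex mat \<Rightarrow> complex mat) \<Rightarrow> bool" where
  "completely_positive \<Psi> \<longleftrightarrow>
     (\<forall>k. \<forall>M. psd (k*2) M \<longrightarrow> psd (k*2) (id_tensor k \<Psi> M))"

definition trace_preserving :: "(complex mat \<Rightarrow> complex mat) \<Rightarrow> bool" where
  "trace_preserving \<Psi> \<longleftrightarrow> (\<forall>A \<in> carrier_mat 2 2. mtrace (\<Psi> A) = mtrace A)"

definition channels :: "(complex mat \<Rightarrow> complex mat) set" where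
  "channels = {\<Psi>. linear_map2 \<Psi> \<and> completely_positive \<Psi> \<and> trace_preserving \<Psi>}"

definition unitary2 :: "complex mat \<Rightarrow> bool" where
  "unitary2 U \<longleftrightarrow> U \<in> carrier_mat 2 2 \<and> U * mat_adjoint U = 1\<^sub>m 2"

definition random_unitary :: "(complex mat \<Rightarrow> complex mat) set" where
  "random_unitary = {\<Psi>. \<exists>(n::nat) (p::nat \<Rightarrow> real) U.
      (\<forall>x<n. p x \<ge> 0 \<and> unitary2 (U x)) \<and> (\<Sum>x<n. p x) = 1 \<and>
      (\<forall>A \<in> carrier_mat 2 2. \<Psi> A =
         mat 2 2 (\<lambda>(i,j). \<Sum>x<n. complex_of_real (p x) * (U x * A * mat_adjoint (U x)) $$ (i,j)))}"

definition separable :: "complex mat \<Rightarrow> bool" where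
  "separable M \<longleftrightarrow> (\<exists>(n::nat) (p::nat \<Rightarrow> real) \<rho>A \<rho>B.
      (\<forall>x<n. p x \<ge> 0 \<and> density 2 (\<rho>A x) \<and> density 2 (\<rho>B x)) \<and> (\<Sum>x<n. p x) = 1 \<and>
      M = mat 4 4 (\<lambda>(i,j). \<Sum>x<n. complex_of_real (p x) * kron2 (\<rho>A x) (\<rho>B x) $$ (i,j)))"

definition ent_breaking :: "(complex mat \<Rightarrow> complex mat) set" where
  "ent_breaking = {\<Psi> \<in> channels. \<forall>\<rho>. density 4 \<rho> \<longrightarrow> separable (id_tensor 2 \<Psi> \<rho>)}"

definition unital_ent_breaking :: "(complex mat \<Rightarrow> complex mat) set" where
  "unital_ent_breaking = {\<Psi> \<in> ent_breaking. \<Psi> (1\<^sub>m 2) = 1\<^sub>m 2}"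

definition discr_obj :: "complex vec \<Rightarrow> complex vec \<Rightarrow> complex vec \<Rightarrow> complex vec
    \<Rightarrow> (complex mat \<Rightarrow> complex mat) \<Rightarrow> complex" where
  "discr_obj \<psi> \<phi> e f \<Psi> =
     1/2 * sandwich e (\<Psi> (ketbra \<psi> \<psi>)) e + 1/2 * sandwich f (\<Psi> (ketbra \<phi> \<phi>)) f"

end

theory Submission
  imports Defs
begin

text \<open>Write |psi><psi| - |phi><phi| = P - N with P, N positive semidefinite of trace
  l = sqrt (1 - |<psi|phi>|^2): the difference is a traceless Hermitian matrix with eigenvalues
  l and -l. For any positive trace-preserving map Psi the objective then equals
  (1 + l)/2 - (<f|Psi P|f> + <e|Psi N|e>)/2, so it is at most (1 + l)/2; this covers all channels
  and all random unitary channels, and the other classes consist of channels.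
  The bound is attained by measuring in the eigenbasis {p, q} of the difference (p for the
  eigenvalue l) and preparing e resp. f. This channel is unital and entanglement breaking, and
  it is the average of the conjugations by the unitaries |e><p| + |f><q| and |e><p| - |f><q|.\<close>

lemma sum_lessThan_2: "(\<Sum>i<2. (g :: nat \<Rightarrow> _) i) = g 0 + (g 1 :: 'a::comm_monoid_add)"
  by (simp add: numeral_2_eq_2)

lemma sum_atLeast0_lessThan_2: "(\<Sum>i\<in>{0..<2}. (g :: nat \<Rightarrow> _) i) = g 0 + (g 1 :: 'a::comm_monoid_add)"
  by (simp add: numeral_2_eq_2)

lemma less_2_cases: "i < (2::nat) \<Longrightarrow> i = 0 \<or> i = 1"
  by auto

definition v2 :: "complex \<Rightarrow> complex \<Rightarrow> complex vec" where
  "v2 a b = vec 2 (\<lambda>i. if i = 0 then a else b)"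

lemma v2_simps [simp]:
  "v2 a b $ 0 = a" "v2 a b $ 1 = b" "v2 a b $ Suc 0 = b"
  "v2 a b \<in> carrier_vec 2" "dim_vec (v2 a b) = 2"
  unfolding v2_def by auto

definition mat2 :: "complex \<Rightarrow> complex \<Rightarrow> complex \<Rightarrow> complex \<Rightarrow> complex mat" where
  "mat2 a b c d = mat 2 2 (\<lambda>(i,j). if i = 0 then (if j = 0 then a else b) else (if j = 0 then c else d))"

lemma mat2_simps [simp]:
  "mat2 a b c d \<in> carrier_mat 2 2" "dim_row (mat2 a b c d) = 2" "dim_col (mat2 a b c d) = 2"
  "mat2 a b c d $$ (0,0) = a" "mat2 a b c d $$ (0,1) = b"
  "mat2 a b c d $$ (1,0) = c" "mat2 a b c d $$ (1,1) = d"
  "mat2 a b c d $$ (0,Suc 0) = b" "mat2 a b c d $$ (Suc 0,0) = c" "mat2 a b c d $$ (Suc 0,Suc 0) = d"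
  unfolding mat2_def by auto

lemma braket_2:
  "v \<in> carrier_vec 2 \<Longrightarrow> w \<in> carrier_vec 2 \<Longrightarrow> braket v w = cnj (v$0) * w$0 + cnj (v$1) * w$1"
  unfolding braket_def scalar_prod_def by (simp add: sum_atLeast0_lessThan_2 mult.commute)

lemma mult_mat_vec_2:
  "M \<in> carrier_mat 2 2 \<Longrightarrow> w \<in> carrier_vec 2 \<Longrightarrow>
   M *\<^sub>v w = vec 2 (\<lambda>i. M$$(i,0) * w$0 + M$$(i,1) * w$1)"
  by (rule eq_vecI) (auto simp: scalar_prod_def sum_atLeast0_lessThan_2 row_def)

lemma sandwich_2:
  "u \<in> carrier_vec 2 \<Longrightarrow> w \<in> carrier_vec 2 \<Longrightarrow> M \<in> carrier_mat 2 2 \<Longrightarrow>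
   sandwich u M w = cnj (u$0) * (M$$(0,0) * w$0 + M$$(0,1) * w$1)
                  + cnj (u$1) * (M$$(1,0) * w$0 + M$$(1,1) * w$1)"
  unfolding sandwich_def by (simp add: mult_mat_vec_2 braket_2)

lemma mtrace_2: "M \<in> carrier_mat 2 2 \<Longrightarrow> mtrace M = M$$(0,0) + M$$(1,1)"
  unfolding mtrace_def by (simp add: sum_lessThan_2)

lemma unit_vec2D:
  "unit_vec2 v \<Longrightarrow> v \<in> carrier_vec 2 \<and> v$0 * cnj (v$0) + v$1 * cnj (v$1) = 1"
  unfolding unit_vec2_def scalar_prod_def by (auto simp: sum_atLeast0_lessThan_2)

lemma unit_vec2_v2: "a * cnj a + b * cnj b = 1 \<Longrightarrow> unit_vec2 (v2 a b)"
  unfolding unit_vec2_def scalar_prod_def by (simp add: sum_atLeast0_lessThan_2)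

lemma braket_self_unit: "unit_vec2 v \<Longrightarrow> braket v v = 1"
  using unit_vec2D[of v] by (simp add: braket_2 mult.commute)

lemma braket_swap:
  assumes "v \<in> carrier_vec n" "w \<in> carrier_vec n"
  shows "braket w v = cnj (braket v w)"
proof -
  have "cnj (braket v w) = conjugate w \<bullet> v"
    unfolding braket_def using conjugate_sprod_vec[of w n "conjugate v"] assms
    by (simp add: conjugate_complex_def)
  also have "\<dots> = braket w v"
    unfolding braket_def using conjugate_vec_sprod_comm[of v n w] assms by simp
  finally show ?thesis ..
qed

lemma ketbra_dim [simp]: "dim_row (ketbra v w) = dim_vec v" "dim_col (ketbra v w) = dim_vec w"
  unfolding ketbra_def by simp_all

lemma ketbra_carrier: "v \<in> carrier_vec 2 \<Longrightarrow> w \<in> carrier_vec 2 \<Longrightarrow> ketbra v w \<in> carrier_mat 2 2"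
  unfolding ketbra_def by auto

lemma ketbra_index:
  "v \<in> carrier_vec 2 \<Longrightarrow> w \<in> carrier_vec 2 \<Longrightarrow> i < 2 \<Longrightarrow> j < 2 \<Longrightarrow>
   ketbra v w $$ (i,j) = v$i * cnj (w$j)"
  unfolding ketbra_def by auto

lemma mtrace_ketbra_unit: "unit_vec2 v \<Longrightarrow> mtrace (ketbra v v) = 1"
  using unit_vec2D[of v] by (simp add: mtrace_2 ketbra_carrier ketbra_index)

lemma sandwich_add:
  "u \<in> carrier_vec 2 \<Longrightarrow> X \<in> carrier_mat 2 2 \<Longrightarrow> Y \<in> carrier_mat 2 2 \<Longrightarrow>
   sandwich u (X + Y) u = sandwich u X u + sandwich u Y u"
  by (simp add: sandwich_2 algebra_simps)

lemma sandwich_diff: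
  "u \<in> carrier_vec 2 \<Longrightarrow> X \<in> carrier_mat 2 2 \<Longrightarrow> Y \<in> carrier_mat 2 2 \<Longrightarrow>
   sandwich u (X - Y) u = sandwich u X u - sandwich u Y u"
  by (simp add: sandwich_2 minus_carrier_mat algebra_simps)

lemma sandwich_smult:
  "u \<in> carrier_vec 2 \<Longrightarrow> X \<in> carrier_mat 2 2 \<Longrightarrow> sandwich u (c \<cdot>\<^sub>m X) u = c * sandwich u X u"
  by (simp add: sandwich_2 algebra_simps)

lemma onb_resolution_of_identity:
  assumes e: "unit_vec2 e" and f: "unit_vec2 f" and ef: "braket e f = 0" and ij: "i < 2" "j < 2"
  shows "e$i * cnj (e$j) + f$i * cnj (f$j) = (1\<^sub>m 2 :: complex mat) $$ (i,j)"
proof -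
  have ec: "e \<in> carrier_vec 2" and fc: "f \<in> carrier_vec 2"
    and e1: "e$0 * cnj (e$0) + e$1 * cnj (e$1) = 1" and f1: "f$0 * cnj (f$0) + f$1 * cnj (f$1) = 1"
    using unit_vec2D[OF e] unit_vec2D[OF f] by auto
  have ef': "cnj (e$0) * f$0 + cnj (e$1) * f$1 = 0" using ef by (simp add: braket_2 ec fc)
  have fe': "e$0 * cnj (f$0) + e$1 * cnj (f$1) = 0"
    using arg_cong[OF ef', of cnj] by (simp add: mult.commute)
  \<comment> \<open>the matrix with columns e, f has orthonormal columns, hence orthonormal rows\<close>
  define N :: "complex mat" where "N = mat 2 2 (\<lambda>(i,j). if j = 0 then e$i else f$i)"
  define N' :: "complex mat" where "N' = mat 2 2 (\<lambda>(i,j). if i = 0 then cnj (e$j) else cnj (f$j))"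
  have "N' * N = 1\<^sub>m 2"
    by (rule eq_matI) (use e1 f1 ef' fe' in \<open>auto simp: N_def N'_def scalar_prod_def
        sum_atLeast0_lessThan_2 mult.commute dest!: less_2_cases\<close>)
  then have "N * N' = 1\<^sub>m 2"
    by (rule mat_mult_left_right_inverse[rotated 2]) (auto simp: N_def N'_def)
  moreover have "(N * N') $$ (i,j) = e$i * cnj (e$j) + f$i * cnj (f$j)"
    using ij by (simp add: N_def N'_def scalar_prod_def sum_atLeast0_lessThan_2)
  ultimately show ?thesis by simp
qed

lemma sandwich_onb_sum:
  assumes e: "unit_vec2 e" and f: "unit_vec2 f" and ef: "braket e f = 0" and X: "X \<in> carrier_mat 2 2"
  shows "sandwich e X e + sandwich f X f = mtrace X"
proof -
  have ec: "e \<in> carrier_vec 2" and fc: "f \<in> carrier_vec 2"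
    using unit_vec2D e f by auto
  note c = onb_resolution_of_identity[OF e f ef]
  have "sandwich e X e + sandwich f X f =
     X$$(0,0) * (e$0 * cnj (e$0) + f$0 * cnj (f$0)) + X$$(0,1) * (e$1 * cnj (e$0) + f$1 * cnj (f$0))
   + X$$(1,0) * (e$0 * cnj (e$1) + f$0 * cnj (f$1)) + X$$(1,1) * (e$1 * cnj (e$1) + f$1 * cnj (f$1))"
    using X ec fc by (simp add: sandwich_2 algebra_simps)
  also have "\<dots> = mtrace X" using X c by (simp add: mtrace_2)
  finally show ?thesis .
qed

section \<open>Positive semidefinite matrices\<close>

lemma psd_carrier: "psd n M \<Longrightarrow> M \<in> carrier_mat n n"
  unfolding psd_def by auto

lemma psd_sandwich_nonneg: "psd n M \<Longrightarrow> u \<in> carrier_vec n \<Longrightarrow> 0 \<le> sandwich u M u"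
  unfolding psd_def sandwich_def by auto

lemma psd_add:
  assumes A: "psd n A" and B: "psd n B"
  shows "psd n (A + B)"
  unfolding psd_def
proof (intro conjI ballI)
  have Ac: "A \<in> carrier_mat n n" and Bc: "B \<in> carrier_mat n n"
    using A B by (auto dest: psd_carrier)
  then show "A + B \<in> carrier_mat n n" by simp
  fix v :: "complex vec" assume v: "v \<in> carrier_vec n"
  have "braket v ((A + B) *\<^sub>v v) = braket v (A *\<^sub>v v) + braket v (B *\<^sub>v v)"
    unfolding braket_def using Ac Bc v
    by (simp add: add_mult_distrib_mat_vec add_scalar_prod_distrib[of _ n])
  moreover have "0 \<le> braket v (A *\<^sub>v v)" "0 \<le> braket v (B *\<^sub>v v)"
    using A B v unfolding psd_def by auto
  ultimately show "0 \<le> braket v ((A + B) *\<^sub>v v)" by simp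
qed

lemma psd_smult:
  assumes M: "psd n M" and c: "0 \<le> c"
  shows "psd n (c \<cdot>\<^sub>m M)"
  unfolding psd_def
proof (intro conjI ballI)
  have Mc: "M \<in> carrier_mat n n" using M by (rule psd_carrier)
  then show "c \<cdot>\<^sub>m M \<in> carrier_mat n n" by simp
  fix v :: "complex vec" assume v: "v \<in> carrier_vec n"
  have "(c \<cdot>\<^sub>m M) *\<^sub>v v = c \<cdot>\<^sub>v (M *\<^sub>v v)"
    by (rule eq_vecI) (use Mc v in \<open>auto simp: scalar_prod_def sum_distrib_left ac_simps\<close>)
  then have "braket v ((c \<cdot>\<^sub>m M) *\<^sub>v v) = c * braket v (M *\<^sub>v v)"
    unfolding braket_def using Mc v by simp
  moreover have "0 \<le> braket v (M *\<^sub>v v)" using M v unfolding psd_def by auto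
  ultimately show "0 \<le> braket v ((c \<cdot>\<^sub>m M) *\<^sub>v v)" using c by simp
qed

lemma psd2_quadratic_form:
  "psd 2 M \<Longrightarrow> 0 \<le> cnj a * (M$$(0,0) * a + M$$(0,1) * b) + cnj b * (M$$(1,0) * a + M$$(1,1) * b)"
  using psd_sandwich_nonneg[of 2 M "v2 a b"] by (simp add: sandwich_2 psd_carrier)

lemma psd2_diag_nonneg: "psd 2 M \<Longrightarrow> 0 \<le> M$$(0,0) \<and> 0 \<le> M$$(1,1)"
  using psd2_quadratic_form[of M 1 0] psd2_quadratic_form[of M 0 1] by simp

lemma psd2_mtrace_zero:
  assumes M: "psd 2 M" and tr: "mtrace M = 0"
  shows "M = 0\<^sub>m 2 2"
proof -
  have Mc: "M \<in> carrier_mat 2 2" using M by (rule psd_carrier)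
  have d: "0 \<le> M$$(0,0)" "0 \<le> M$$(1,1)" using psd2_diag_nonneg[OF M] by auto
  have d0: "M$$(0,0) = 0" "M$$(1,1) = 0"
    using d tr by (auto simp: mtrace_2[OF Mc] add_nonneg_eq_0_iff)
  have h: "0 \<le> M$$(0,1) * z + cnj z * M$$(1,0)" for z
    using psd2_quadratic_form[OF M, of 1 z] d0 by simp
  have "0 \<le> M$$(0,1) + M$$(1,0)" "0 \<le> - (M$$(0,1) + M$$(1,0))"
    using h[of 1] h[of "-1"] by simp_all
  then have s: "M$$(0,1) + M$$(1,0) = 0" by (auto simp: less_eq_complex_def complex_eq_iff)
  have "0 \<le> \<i> * (M$$(0,1) - M$$(1,0))" "0 \<le> - (\<i> * (M$$(0,1) - M$$(1,0)))"
    using h[of \<i>] h[of "-\<i>"] by (simp_all add: algebra_simps)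
  then have "\<i> * (M$$(0,1) - M$$(1,0)) = 0" by (auto simp: less_eq_complex_def complex_eq_iff)
  with s have "M$$(0,1) = 0" "M$$(1,0) = 0" by auto
  with d0 Mc show ?thesis
    by (intro eq_matI) (auto dest!: less_2_cases)
qed

lemma psd2_of_det_nonneg:
  fixes \<alpha> \<delta> :: real
  assumes M: "M \<in> carrier_mat 2 2" and a: "M$$(0,0) = of_real \<alpha>" and d: "M$$(1,1) = of_real \<delta>"
    and herm: "M$$(1,0) = cnj (M$$(0,1))" and a0: "0 \<le> \<alpha>" and d0: "0 \<le> \<delta>"
    and det: "(cmod (M$$(0,1)))\<^sup>2 \<le> \<alpha> * \<delta>"
  shows "psd 2 M"
  unfolding psd_def
proof (intro conjI ballI M)
  fix v :: "complex vec" assume v: "v \<in> carrier_vec 2"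
  define z where "z = cnj (v$0) * M$$(0,1) * v$1"
  define A where "A = \<alpha> * (cmod (v$0))\<^sup>2"
  define D where "D = \<delta> * (cmod (v$1))\<^sup>2"
  define t where "t = cmod (v$0) * cmod (M$$(0,1)) * cmod (v$1)"
  have sq: "v$k * cnj (v$k) = of_real ((cmod (v$k))\<^sup>2)" for k
    by (metis complex_norm_square of_real_power)
  have "braket v (M *\<^sub>v v) = of_real \<alpha> * (v$0 * cnj (v$0)) + of_real \<delta> * (v$1 * cnj (v$1)) + (z + cnj z)"
    using M v a d herm unfolding z_def by (simp add: mult_mat_vec_2 braket_2 algebra_simps)
  also have "\<dots> = of_real (A + D + 2 * Re z)"
    unfolding sq A_def D_def by (simp add: complex_add_cnj)
  finally have form: "braket v (M *\<^sub>v v) = of_real (A + D + 2 * Re z)" .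
  have "t\<^sup>2 \<le> A * D"
  proof -
    have "t\<^sup>2 = (cmod (M$$(0,1)))\<^sup>2 * ((cmod (v$0))\<^sup>2 * (cmod (v$1))\<^sup>2)"
      by (simp add: t_def power_mult_distrib)
    also have "\<dots> \<le> (\<alpha> * \<delta>) * ((cmod (v$0))\<^sup>2 * (cmod (v$1))\<^sup>2)"
      using det by (intro mult_right_mono) auto
    finally show ?thesis by (simp add: A_def D_def mult_ac)
  qed
  then have "t \<le> sqrt (A * D)" by (rule real_le_rsqrt)
  also have "\<dots> \<le> (A + D) / 2" by (rule arith_geo_mean_sqrt) (use a0 d0 in \<open>simp_all add: A_def D_def\<close>)
  finally have "2 * t \<le> A + D" by simp
  moreover have "- Re z \<le> t"
    using abs_Re_le_cmod[of z] by (simp add: t_def z_def norm_mult)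
  ultimately have "0 \<le> A + D + 2 * Re z" by linarith
  then show "0 \<le> braket v (M *\<^sub>v v)" unfolding form by (simp add: less_eq_complex_def)
qed

lemma ketbra_psd: "v \<in> carrier_vec 2 \<Longrightarrow> psd 2 (ketbra v v)"
  unfolding psd_def
proof (intro conjI ballI ketbra_carrier, assumption)
  fix u :: "complex vec" assume v: "v \<in> carrier_vec 2" and u: "u \<in> carrier_vec 2"
  have "braket u (ketbra v v *\<^sub>v u) = braket v u * cnj (braket v u)"
    using u v ketbra_carrier[OF v v] by (simp add: braket_2 mult_mat_vec_2 ketbra_index algebra_simps)
  also have "\<dots> = of_real ((cmod (braket v u))\<^sup>2)" by (metis complex_norm_square of_real_power)
  finally show "0 \<le> braket u (ketbra v v *\<^sub>v u)" by (simp add: less_eq_complex_def)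
qed

lemma ketbra_density: "unit_vec2 v \<Longrightarrow> density 2 (ketbra v v)"
  unfolding density_def using ketbra_psd mtrace_ketbra_unit unit_vec2D by blast

section \<open>The difference of two pure states\<close>

text \<open>In coordinates, -det (|psi><psi| - |phi><phi|) = 1 - |<psi|phi>|^2; capital letters
  stand for the conjugates of the corresponding small letters.\<close>

lemma unit_pair_identity:
  fixes a A b B g G h H :: complex
  assumes "a*A + b*B = 1" "g*G + h*H = 1"
  shows "(a*A - g*G)\<^sup>2 + (a*B - g*H) * (A*b - G*h) = 1 - (A*g + B*h) * (a*G + b*H)"
proof -
  have "(a*A - g*G)\<^sup>2 + (a*B - g*H) * (A*b - G*h) - (1 - (A*g + B*h) * (a*G + b*H))
     = (a*A + b*B - 1) * (1 + a*A - g*G + (g*G + h*H - 1)) + (g*G + h*H - 1) * (1 + g*G - a*A)"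
    by (simp add: power2_eq_square algebra_simps)
  then show ?thesis using assms by simp
qed

lemma ketbra_diff_traceless:
  assumes psi: "unit_vec2 \<psi>" and phi: "unit_vec2 \<phi>"
  obtains x :: real and y :: complex where
    "ketbra \<psi> \<psi> - ketbra \<phi> \<phi> = mat2 (of_real x) y (cnj y) (- of_real x)"
    "x\<^sup>2 + (cmod y)\<^sup>2 = 1 - (cmod (braket \<psi> \<phi>))\<^sup>2"
proof
  have pc: "\<psi> \<in> carrier_vec 2" and p1: "\<psi>$0 * cnj (\<psi>$0) + \<psi>$1 * cnj (\<psi>$1) = 1"
    and fc: "\<phi> \<in> carrier_vec 2" and f1: "\<phi>$0 * cnj (\<phi>$0) + \<phi>$1 * cnj (\<phi>$1) = 1"
    using unit_vec2D[OF psi] unit_vec2D[OF phi] by auto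
  have sq: "z * cnj z = of_real ((cmod z)\<^sup>2)" for z
    by (metis complex_norm_square of_real_power)
  define x where "x = (cmod (\<psi>$0))\<^sup>2 - (cmod (\<phi>$0))\<^sup>2"
  define y where "y = \<psi>$0 * cnj (\<psi>$1) - \<phi>$0 * cnj (\<phi>$1)"
  have x0: "\<psi>$0 * cnj (\<psi>$0) - \<phi>$0 * cnj (\<phi>$0) = of_real x"
    unfolding x_def sq by simp
  have "\<psi>$1 * cnj (\<psi>$1) = 1 - \<psi>$0 * cnj (\<psi>$0)" "\<phi>$1 * cnj (\<phi>$1) = 1 - \<phi>$0 * cnj (\<phi>$0)"
    using p1 f1 by (simp_all add: eq_diff_eq add.commute)
  then have x1: "\<psi>$1 * cnj (\<psi>$1) - \<phi>$1 * cnj (\<phi>$1) = - of_real x"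
    unfolding x0[symmetric] by simp
  show "ketbra \<psi> \<psi> - ketbra \<phi> \<phi> = mat2 (of_real x) y (cnj y) (- of_real x)"
  proof (rule eq_matI)
    fix i j assume "i < dim_row (mat2 (of_real x) y (cnj y) (- of_real x))"
      "j < dim_col (mat2 (of_real x) y (cnj y) (- of_real x))"
    then have "i < 2" "j < 2" by simp_all
    then show "(ketbra \<psi> \<psi> - ketbra \<phi> \<phi>) $$ (i,j) = mat2 (of_real x) y (cnj y) (- of_real x) $$ (i,j)"
      using pc fc x0 x1 by (auto simp: ketbra_def y_def mult.commute dest!: less_2_cases)
  qed (use pc fc in \<open>auto simp: ketbra_def\<close>)
  have "(\<psi>$0 * cnj (\<psi>$0) - \<phi>$0 * cnj (\<phi>$0))\<^sup>2 + y * cnj y = 1 - braket \<psi> \<phi> * cnj (braket \<psi> \<phi>)"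
    using unit_pair_identity[OF p1 f1] pc fc by (simp add: y_def braket_2 mult.commute)
  then have "of_real (x\<^sup>2 + (cmod y)\<^sup>2) = (of_real (1 - (cmod (braket \<psi> \<phi>))\<^sup>2) :: complex)"
    unfolding x0 by (simp add: sq)
  then show "x\<^sup>2 + (cmod y)\<^sup>2 = 1 - (cmod (braket \<psi> \<phi>))\<^sup>2"
    by (rule of_real_eq_iff[THEN iffD1])
qed

lemma cmod_braket_unit_le_1:
  assumes "unit_vec2 \<psi>" "unit_vec2 \<phi>"
  shows "(cmod (braket \<psi> \<phi>))\<^sup>2 \<le> 1"
proof -
  obtain x y where "x\<^sup>2 + (cmod y)\<^sup>2 = 1 - (cmod (braket \<psi> \<phi>))\<^sup>2"
    using ketbra_diff_traceless[OF assms] .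
  moreover have "0 \<le> x\<^sup>2 + (cmod y)\<^sup>2" by simp
  ultimately show ?thesis by linarith
qed

text \<open>The eigenvector is proportional to (l + x, cnj y), whose squared norm is 2 l (l + x).\<close>

lemma traceless_hermitian_eigen_equations:
  fixes x l :: real and y :: complex
  assumes xy: "x\<^sup>2 + (cmod y)\<^sup>2 = l\<^sup>2" and l: "0 \<le> l" and pos: "0 < l + x"
  defines "r \<equiv> sqrt (2 * l * (l + x))"
  defines "a \<equiv> complex_of_real ((l + x) / r)" and "b \<equiv> cnj y * of_real (1 / r)"
  shows "a * cnj a + b * cnj b = 1"
    and "of_real x * a + y * b = of_real l * a" and "cnj y * a - of_real x * b = of_real l * b"
proof -
  have "y * cnj y = of_real ((cmod y)\<^sup>2)" by (rule complex_norm_square[symmetric])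
  also have "(cmod y)\<^sup>2 = l\<^sup>2 - x\<^sup>2" using xy by simp
  finally have yy: "y * cnj y = of_real (l\<^sup>2 - x\<^sup>2)" .
  have "x\<^sup>2 \<le> l\<^sup>2" unfolding xy[symmetric] by simp
  with l have "\<bar>x\<bar> \<le> l" using power2_le_imp_le[of "\<bar>x\<bar>" l] by simp
  with pos have r0: "r > 0" and r2: "r\<^sup>2 = 2 * l * (l + x)"
    unfolding r_def by auto
  have "b * cnj b = (y * cnj y) * of_real ((1 / r)\<^sup>2)"
    by (simp add: b_def power2_eq_square mult_ac)
  then have "a * cnj a + b * cnj b = of_real (((l + x) / r)\<^sup>2 + (l\<^sup>2 - x\<^sup>2) * (1 / r)\<^sup>2)"
    unfolding yy by (simp add: a_def power2_eq_square)
  also have "((l + x) / r)\<^sup>2 + (l\<^sup>2 - x\<^sup>2) * (1 / r)\<^sup>2 = ((l + x)\<^sup>2 + (l\<^sup>2 - x\<^sup>2)) / r\<^sup>2"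
    using r0 by (simp add: field_simps power2_eq_square)
  also have "(l + x)\<^sup>2 + (l\<^sup>2 - x\<^sup>2) = r\<^sup>2"
    unfolding r2 by (simp add: power2_eq_square algebra_simps)
  finally show "a * cnj a + b * cnj b = 1" using r0 by simp
  have "y * b = of_real ((l\<^sup>2 - x\<^sup>2) * (1 / r))"
    unfolding b_def mult.assoc[symmetric] yy by simp
  then have "of_real x * a + y * b = of_real (x * ((l + x) / r) + (l\<^sup>2 - x\<^sup>2) * (1 / r))"
    by (simp add: a_def)
  also have "x * ((l + x) / r) + (l\<^sup>2 - x\<^sup>2) * (1 / r) = l * ((l + x) / r)"
    by (simp add: add_divide_distrib[symmetric] power2_eq_square algebra_simps)
  finally show "of_real x * a + y * b = of_real l * a" by (simp add: a_def)
  have "cnj y * a - of_real x * b = cnj y * of_real ((l + x) / r - x * (1 / r))"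
    by (simp add: a_def b_def algebra_simps)
  also have "(l + x) / r - x * (1 / r) = l * (1 / r)"
    by (simp add: diff_divide_distrib[symmetric])
  finally show "cnj y * a - of_real x * b = of_real l * b" by (simp add: b_def mult_ac)
qed

lemma traceless_hermitian_top_eigenvector:
  fixes x l :: real and y :: complex
  assumes xy: "x\<^sup>2 + (cmod y)\<^sup>2 = l\<^sup>2" and l: "0 \<le> l"
  obtains a b where "a * cnj a + b * cnj b = 1"
    "sandwich (v2 a b) (mat2 (of_real x) y (cnj y) (- of_real x)) (v2 a b) = of_real l"
proof (cases "0 < l + x")
  case True
  define r where "r = sqrt (2 * l * (l + x))"
  define a where "a = complex_of_real ((l + x) / r)"
  define b where "b = cnj y * of_real (1 / r)"
  note eq = traceless_hermitian_eigen_equations[OF xy l True, folded r_def, folded a_def b_def]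
  have "sandwich (v2 a b) (mat2 (of_real x) y (cnj y) (- of_real x)) (v2 a b)
      = cnj a * (of_real x * a + y * b) + cnj b * (cnj y * a - of_real x * b)"
    by (simp add: sandwich_2)
  also have "\<dots> = of_real l * (a * cnj a + b * cnj b)"
    unfolding eq(2,3) by (simp add: algebra_simps)
  finally show ?thesis using eq(1) that by simp
next
  case False
  have "x\<^sup>2 \<le> l\<^sup>2" unfolding xy[symmetric] by simp
  with l have "\<bar>x\<bar> \<le> l" using power2_le_imp_le[of "\<bar>x\<bar>" l] by simp
  with False have "x = - l" by linarith
  with xy have "y = 0" by simp
  with \<open>x = - l\<close> show ?thesis
    using that[of 0 1] by (simp add: sandwich_2)
qed

lemma psd2_traceless_shift:
  fixes x l :: real and y :: complex
  assumes xy: "x\<^sup>2 + (cmod y)\<^sup>2 = l\<^sup>2" and l: "0 \<le> l"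
  shows "psd 2 (mat2 (of_real ((l + x) / 2)) (y / 2) (cnj y / 2) (of_real ((l - x) / 2)))"
proof (rule psd2_of_det_nonneg[of _ "(l + x) / 2" "(l - x) / 2"])
  have "x\<^sup>2 \<le> l\<^sup>2" unfolding xy[symmetric] by simp
  with l show "0 \<le> (l + x) / 2" "0 \<le> (l - x) / 2"
    using power2_le_imp_le[of "\<bar>x\<bar>" l] by auto
  have "(cmod (y / 2))\<^sup>2 = (cmod y)\<^sup>2 / 4"
    by (simp add: norm_divide power_divide)
  also have "\<dots> = (l + x) / 2 * ((l - x) / 2)"
    using xy by (simp add: power2_eq_square algebra_simps)
  finally show "(cmod (mat2 (of_real ((l + x) / 2)) (y / 2) (cnj y / 2) (of_real ((l - x) / 2)) $$ (0,1)))\<^sup>2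
      \<le> (l + x) / 2 * ((l - x) / 2)" by simp
qed simp_all

lemma mat_add_eq_add_of_diff_eq:
  fixes A B P N :: "'a::ab_group_add mat"
  assumes carrier: "A \<in> carrier_mat n m" "B \<in> carrier_mat n m" "P \<in> carrier_mat n m" "N \<in> carrier_mat n m"
    and diff: "A - B = P - N"
  shows "A + N = P + B"
proof (rule eq_matI)
  fix i j assume "i < dim_row (P + B)" "j < dim_col (P + B)"
  then have ij: "i < n" "j < m" using carrier by auto
  have "(A + N) $$ (i,j) = ((A - B) $$ (i,j) + B $$ (i,j)) + N $$ (i,j)"
    using ij carrier by simp
  also have "\<dots> = ((P - N) $$ (i,j) + B $$ (i,j)) + N $$ (i,j)"
    unfolding diff ..
  also have "\<dots> = (P + B) $$ (i,j)"
    using ij carrier by simp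
  finally show "(A + N) $$ (i,j) = (P + B) $$ (i,j)" .
qed (use carrier in auto)

section \<open>The upper bound\<close>

definition positive_map2 :: "(complex mat \<Rightarrow> complex mat) \<Rightarrow> bool" where
  "positive_map2 \<Psi> \<longleftrightarrow> (\<forall>M. psd 2 M \<longrightarrow> psd 2 (\<Psi> M))"

lemma linear_map2_carrier: "linear_map2 \<Psi> \<Longrightarrow> A \<in> carrier_mat 2 2 \<Longrightarrow> \<Psi> A \<in> carrier_mat 2 2"
  unfolding linear_map2_def by blast

lemma linear_map2_add:
  "linear_map2 \<Psi> \<Longrightarrow> A \<in> carrier_mat 2 2 \<Longrightarrow> B \<in> carrier_mat 2 2 \<Longrightarrow> \<Psi> (A + B) = \<Psi> A + \<Psi> B"
  unfolding linear_map2_def by blast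

lemma id_tensor_1:
  assumes M: "M \<in> carrier_mat 2 2" and PM: "\<Psi> M \<in> carrier_mat 2 2"
  shows "id_tensor 1 \<Psi> M = \<Psi> M"
proof -
  have "block2 M 0 0 = M"
    by (rule eq_matI) (use M in \<open>auto simp: block2_def\<close>)
  then show ?thesis
    by (intro eq_matI) (use PM in \<open>auto simp: id_tensor_def\<close>)
qed

lemma channel_positive: "\<Psi> \<in> channels \<Longrightarrow> positive_map2 \<Psi>"
  unfolding positive_map2_def
proof (intro allI impI)
  fix M assume \<Psi>: "\<Psi> \<in> channels" and M: "psd 2 M"
  have "psd (1*2) M" using M by simp
  then have "psd (1*2) (id_tensor 1 \<Psi> M)"
    using \<Psi> unfolding channels_def completely_positive_def by blast
  moreover have "id_tensor 1 \<Psi> M = \<Psi> M"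
    using \<Psi> psd_carrier[OF M] by (intro id_tensor_1) (auto simp: channels_def linear_map2_def)
  ultimately show "psd 2 (\<Psi> M)" by simp
qed

lemma discrimination_le_of_decomposition:
  fixes l :: real
  assumes lin: "linear_map2 \<Psi>" and pos: "positive_map2 \<Psi>" and tp: "trace_preserving \<Psi>"
    and e: "unit_vec2 e" and f: "unit_vec2 f" and ef: "braket e f = 0"
    and \<rho>1: "\<rho>1 \<in> carrier_mat 2 2" and \<rho>2: "\<rho>2 \<in> carrier_mat 2 2" and tr2: "mtrace \<rho>2 = 1"
    and P: "psd 2 P" and N: "psd 2 N" and trP: "mtrace P = of_real l"
    and decomp: "\<rho>1 + N = P + \<rho>2"
  shows "1/2 * sandwich e (\<Psi> \<rho>1) e + 1/2 * sandwich f (\<Psi> \<rho>2) f \<le> of_real ((1 + l) / 2)"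
proof -
  have Pc: "P \<in> carrier_mat 2 2" and Nc: "N \<in> carrier_mat 2 2"
    using P N by (auto dest: psd_carrier)
  have ec: "e \<in> carrier_vec 2" and fc: "f \<in> carrier_vec 2"
    using e f by (auto dest: unit_vec2D)
  note carr = linear_map2_carrier[OF lin]
  have trace_split: "sandwich e (\<Psi> X) e + sandwich f (\<Psi> X) f = mtrace X" if "X \<in> carrier_mat 2 2" for X
    using sandwich_onb_sum[OF e f ef carr[OF that]] tp that unfolding trace_preserving_def by simp
  have "\<Psi> \<rho>1 + \<Psi> N = \<Psi> (\<rho>1 + N)" using linear_map2_add[OF lin \<rho>1 Nc] ..
  also have "\<dots> = \<Psi> (P + \<rho>2)" using decomp by simp
  also have "\<dots> = \<Psi> P + \<Psi> \<rho>2" using linear_map2_add[OF lin Pc \<rho>2] .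
  finally have "sandwich e (\<Psi> \<rho>1 + \<Psi> N) e = sandwich e (\<Psi> P + \<Psi> \<rho>2) e" by simp
  then have "sandwich e (\<Psi> \<rho>1) e + sandwich e (\<Psi> N) e = sandwich e (\<Psi> P) e + sandwich e (\<Psi> \<rho>2) e"
    by (simp add: sandwich_add[OF ec] carr \<rho>1 \<rho>2 Pc Nc)
  then have \<rho>1_eq: "sandwich e (\<Psi> \<rho>1) e = sandwich e (\<Psi> P) e + sandwich e (\<Psi> \<rho>2) e - sandwich e (\<Psi> N) e"
    by (simp add: eq_diff_eq)
  have \<rho>2_eq: "sandwich f (\<Psi> \<rho>2) f = 1 - sandwich e (\<Psi> \<rho>2) e"
    using trace_split[OF \<rho>2] tr2 by (simp add: eq_diff_eq add.commute)
  have P_eq: "sandwich e (\<Psi> P) e = of_real l - sandwich f (\<Psi> P) f"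
    using trace_split[OF Pc] trP by (simp add: eq_diff_eq)
  have "1/2 * sandwich e (\<Psi> \<rho>1) e + 1/2 * sandwich f (\<Psi> \<rho>2) f
      = 1/2 * (of_real l - sandwich f (\<Psi> P) f + sandwich e (\<Psi> \<rho>2) e - sandwich e (\<Psi> N) e)
        + 1/2 * (1 - sandwich e (\<Psi> \<rho>2) e)"
    unfolding \<rho>1_eq \<rho>2_eq P_eq ..
  also have "\<dots> = of_real ((1 + l) / 2) - (sandwich f (\<Psi> P) f + sandwich e (\<Psi> N) e) / 2"
    by (simp add: field_simps)
  finally have success: "1/2 * sandwich e (\<Psi> \<rho>1) e + 1/2 * sandwich f (\<Psi> \<rho>2) f
      = of_real ((1 + l) / 2) - (sandwich f (\<Psi> P) f + sandwich e (\<Psi> N) e) / 2" .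
  have "0 \<le> sandwich f (\<Psi> P) f" "0 \<le> sandwich e (\<Psi> N) e"
    using pos P N ec fc unfolding positive_map2_def by (auto intro: psd_sandwich_nonneg)
  then show ?thesis unfolding success by (auto simp: less_eq_complex_def field_simps)
qed

lemma discrimination_upper_bound:
  assumes psi: "unit_vec2 \<psi>" and phi: "unit_vec2 \<phi>" and e: "unit_vec2 e" and f: "unit_vec2 f"
    and ef: "braket e f = 0"
    and lin: "linear_map2 \<Psi>" and pos: "positive_map2 \<Psi>" and tp: "trace_preserving \<Psi>"
  shows "discr_obj \<psi> \<phi> e f \<Psi> \<le> of_real ((1 + sqrt (1 - (cmod (braket \<psi> \<phi>))\<^sup>2)) / 2)"
proof -
  define l where "l = sqrt (1 - (cmod (braket \<psi> \<phi>))\<^sup>2)"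
  obtain x y where D: "ketbra \<psi> \<psi> - ketbra \<phi> \<phi> = mat2 (of_real x) y (cnj y) (- of_real x)"
    and xy: "x\<^sup>2 + (cmod y)\<^sup>2 = 1 - (cmod (braket \<psi> \<phi>))\<^sup>2"
    using ketbra_diff_traceless[OF psi phi] .
  have l2: "x\<^sup>2 + (cmod y)\<^sup>2 = l\<^sup>2" and l: "0 \<le> l"
    using xy cmod_braket_unit_le_1[OF psi phi] by (simp_all add: l_def)
  have pc: "\<psi> \<in> carrier_vec 2" and fc: "\<phi> \<in> carrier_vec 2"
    using psi phi by (auto dest: unit_vec2D)
  \<comment> \<open>the positive and negative parts of the traceless matrix with eigenvalues l and -l\<close>
  define P where "P = mat2 (of_real ((l + x) / 2)) (y / 2) (cnj y / 2) (of_real ((l - x) / 2))"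
  define N where "N = mat2 (of_real ((l - x) / 2)) (- y / 2) (- cnj y / 2) (of_real ((l + x) / 2))"
  have P_psd: "psd 2 P"
    unfolding P_def using l2 l by (rule psd2_traceless_shift)
  have N_psd: "psd 2 N"
    using psd2_traceless_shift[of "- x" "- y" l] l2 l by (simp add: N_def)
  have trP: "mtrace P = of_real l"
    unfolding P_def by (simp add: mtrace_2 field_simps)
  have "P - N = mat2 (of_real x) y (cnj y) (- of_real x)"
    by (rule eq_matI) (auto simp: P_def N_def field_simps dest!: less_2_cases)
  then have decomp: "ketbra \<psi> \<psi> + N = P + ketbra \<phi> \<phi>"
    using D pc fc by (intro mat_add_eq_add_of_diff_eq[of _ 2 2]) (simp_all add: ketbra_carrier P_def N_def)
  show ?thesis
    unfolding discr_obj_def l_def[symmetric]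
    by (rule discrimination_le_of_decomposition[OF lin pos tp e f ef ketbra_carrier[OF pc pc]
          ketbra_carrier[OF fc fc] mtrace_ketbra_unit[OF phi] P_psd N_psd trP decomp])
qed

section \<open>The measure-and-prepare channel\<close>

definition meas_prep :: "complex vec \<Rightarrow> complex vec \<Rightarrow> complex mat \<Rightarrow> complex mat" where
  "meas_prep a b B = mat 2 2 (\<lambda>(i,j). sandwich a B a * (b$i * cnj (b$j)))"

definition measure_prepare ::
    "complex vec \<Rightarrow> complex vec \<Rightarrow> complex vec \<Rightarrow> complex vec \<Rightarrow> complex mat \<Rightarrow> complex mat" where
  "measure_prepare p e q f B = meas_prep p e B + meas_prep q f B"

lemma meas_prep_simps [simp]:
  "meas_prep a b B \<in> carrier_mat 2 2" "dim_row (meas_prep a b B) = 2" "dim_col (meas_prep a b B) = 2"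
  unfolding meas_prep_def by auto

lemma measure_prepare_simps [simp]:
  "measure_prepare p e q f B \<in> carrier_mat 2 2"
  "dim_row (measure_prepare p e q f B) = 2" "dim_col (measure_prepare p e q f B) = 2"
  unfolding measure_prepare_def by auto

lemma measure_prepare_index:
  "i < 2 \<Longrightarrow> j < 2 \<Longrightarrow> measure_prepare p e q f B $$ (i,j) =
     sandwich p B p * (e$i * cnj (e$j)) + sandwich q B q * (f$i * cnj (f$j))"
  unfolding measure_prepare_def meas_prep_def by simp

lemma sandwich_meas_prep:
  "u \<in> carrier_vec 2 \<Longrightarrow> b \<in> carrier_vec 2 \<Longrightarrow>
   sandwich u (meas_prep a b X) u = sandwich a X a * (braket u b * cnj (braket u b))"
  by (simp add: sandwich_2 meas_prep_def braket_2 algebra_simps)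

lemma measure_prepare_linear:
  assumes p: "p \<in> carrier_vec 2" and q: "q \<in> carrier_vec 2"
  shows "linear_map2 (measure_prepare p e q f)"
  unfolding linear_map2_def
proof (intro conjI ballI allI)
  fix A B :: "complex mat" and c :: complex
  assume A: "A \<in> carrier_mat 2 2" and B: "B \<in> carrier_mat 2 2"
  show "measure_prepare p e q f (A + B) = measure_prepare p e q f A + measure_prepare p e q f B"
    by (rule eq_matI) (simp_all add: measure_prepare_index sandwich_add[OF p A B] sandwich_add[OF q A B] distrib_right)
  show "measure_prepare p e q f (c \<cdot>\<^sub>m A) = c \<cdot>\<^sub>m measure_prepare p e q f A"
    by (rule eq_matI) (simp_all add: measure_prepare_index sandwich_smult[OF p A] sandwich_smult[OF q A] distrib_left mult.assoc)
qed simp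

lemma measure_prepare_trace_preserving:
  assumes p: "unit_vec2 p" and q: "unit_vec2 q" and pq: "braket p q = 0"
    and e: "unit_vec2 e" and f: "unit_vec2 f"
  shows "trace_preserving (measure_prepare p e q f)"
  unfolding trace_preserving_def
proof
  fix A :: "complex mat" assume A: "A \<in> carrier_mat 2 2"
  have "mtrace (measure_prepare p e q f A)
      = sandwich p A p * (e$0 * cnj (e$0) + e$1 * cnj (e$1)) + sandwich q A q * (f$0 * cnj (f$0) + f$1 * cnj (f$1))"
    by (simp add: mtrace_2 measure_prepare_index algebra_simps)
  also have "\<dots> = mtrace A"
    using sandwich_onb_sum[OF p q pq A] unit_vec2D[OF e] unit_vec2D[OF f] by simp
  finally show "mtrace (measure_prepare p e q f A) = mtrace A" .
qed

lemma measure_prepare_unital: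
  assumes p: "unit_vec2 p" and q: "unit_vec2 q"
    and e: "unit_vec2 e" and f: "unit_vec2 f" and ef: "braket e f = 0"
  shows "measure_prepare p e q f (1\<^sub>m 2) = 1\<^sub>m 2"
proof (rule eq_matI)
  have "sandwich u (1\<^sub>m 2) u = 1" if "unit_vec2 u" for u
    using unit_vec2D[OF that] by (simp add: sandwich_2 mult.commute)
  then show "measure_prepare p e q f (1\<^sub>m 2) $$ (i,j) = (1\<^sub>m 2 :: complex mat) $$ (i,j)"
    if "i < dim_row (1\<^sub>m 2 :: complex mat)" "j < dim_col (1\<^sub>m 2 :: complex mat)" for i j
    using that onb_resolution_of_identity[OF e f ef] p q by (simp add: measure_prepare_index)
qed simp_all

lemma discr_obj_measure_prepare:
  assumes psi: "unit_vec2 \<psi>" and phi: "unit_vec2 \<phi>"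
    and p: "unit_vec2 p" and q: "unit_vec2 q" and pq: "braket p q = 0"
    and e: "unit_vec2 e" and f: "unit_vec2 f" and ef: "braket e f = 0"
  shows "discr_obj \<psi> \<phi> e f (measure_prepare p e q f) = (1 + sandwich p (ketbra \<psi> \<psi> - ketbra \<phi> \<phi>) p) / 2"
proof -
  have pc: "p \<in> carrier_vec 2" and ec: "e \<in> carrier_vec 2" and fc: "f \<in> carrier_vec 2"
    and psc: "\<psi> \<in> carrier_vec 2" and phc: "\<phi> \<in> carrier_vec 2"
    using p e f psi phi by (auto dest: unit_vec2D)
  have fe: "braket f e = 0" using braket_swap[OF ec fc] ef by simp
  have se: "sandwich e (measure_prepare p e q f X) e = sandwich p X p" for X
    unfolding measure_prepare_def sandwich_add[OF ec meas_prep_simps(1) meas_prep_simps(1)]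
      sandwich_meas_prep[OF ec ec] sandwich_meas_prep[OF ec fc] braket_self_unit[OF e] ef by simp
  have sf: "sandwich f (measure_prepare p e q f X) f = sandwich q X q" for X
    unfolding measure_prepare_def sandwich_add[OF fc meas_prep_simps(1) meas_prep_simps(1)]
      sandwich_meas_prep[OF fc ec] sandwich_meas_prep[OF fc fc] braket_self_unit[OF f] fe by simp
  have q_phi: "sandwich q (ketbra \<phi> \<phi>) q = 1 - sandwich p (ketbra \<phi> \<phi>) p"
    using sandwich_onb_sum[OF p q pq ketbra_carrier[OF phc phc]] mtrace_ketbra_unit[OF phi]
    by (simp add: eq_diff_eq add.commute)
  have "discr_obj \<psi> \<phi> e f (measure_prepare p e q f)
      = (1 + (sandwich p (ketbra \<psi> \<psi>) p - sandwich p (ketbra \<phi> \<phi>) p)) / 2"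
    unfolding discr_obj_def se sf q_phi by (simp add: field_simps)
  then show ?thesis
    by (simp add: sandwich_diff[OF pc ketbra_carrier[OF psc psc] ketbra_carrier[OF phc phc]])
qed

lemma div_mod_2_simps [simp]:
  "(2*i+1) div 2 = (i::nat)" "(2*i+1) mod 2 = (1::nat)" "(2*i) div 2 = (i::nat)" "(2*i) mod 2 = (0::nat)"
  "Suc (i*2) div 2 = i" "Suc (i*2) mod 2 = 1" "(i*2) div 2 = i" "(i*2) mod 2 = 0"
  by presburger+

lemma sum_pairs: "(\<Sum>r\<in>{0..<(k::nat)*2}. g r) = (\<Sum>i<k. g (2*i) + (g (2*i+1) :: 'a::comm_monoid_add))"
  by (induction k) (simp_all add: algebra_simps)

lemma double_sum_pairs:
  "(\<Sum>r\<in>{0..<(k::nat)*2}. \<Sum>c\<in>{0..<k*2}. G r c) =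
   (\<Sum>i<k. \<Sum>i'<k. G (2*i) (2*i') + G (2*i) (2*i'+1) + G (2*i+1) (2*i') + (G (2*i+1) (2*i'+1) :: 'a::comm_monoid_add))"
  by (simp add: sum_pairs sum.distrib algebra_simps)

lemma braket_mult_mat_vec:
  "v \<in> carrier_vec n \<Longrightarrow> X \<in> carrier_mat n n \<Longrightarrow>
   braket v (X *\<^sub>v v) = (\<Sum>r\<in>{0..<n}. \<Sum>c\<in>{0..<n}. X$$(r,c) * v$c * cnj (v$r))"
  unfolding braket_def scalar_prod_def by (simp add: sum_distrib_right scalar_prod_def)

lemma block2_simps [simp]:
  "block2 M i j \<in> carrier_mat 2 2" "dim_row (block2 M i j) = 2" "dim_col (block2 M i j) = 2"
  unfolding block2_def by auto

lemma id_tensor_simps [simp]: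
  "id_tensor k \<Psi> M \<in> carrier_mat (k*2) (k*2)"
  "dim_row (id_tensor k \<Psi> M) = k*2" "dim_col (id_tensor k \<Psi> M) = k*2"
  unfolding id_tensor_def by simp_all

lemma id_tensor_index:
  "r < k*2 \<Longrightarrow> c < k*2 \<Longrightarrow>
   id_tensor k \<Psi> M $$ (r,c) = \<Psi> (block2 M (r div 2) (c div 2)) $$ (r mod 2, c mod 2)"
  unfolding id_tensor_def by simp

lemma meas_prep_index:
  "i < 2 \<Longrightarrow> j < 2 \<Longrightarrow> meas_prep a b B $$ (i,j) = sandwich a B a * (b$i * cnj (b$j))"
  unfolding meas_prep_def by simp

definition vec_block :: "complex vec \<Rightarrow> nat \<Rightarrow> complex vec" where
  "vec_block v i = v2 (v$(2*i)) (v$(2*i+1))"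

lemma braket_blocks:
  assumes X: "X \<in> carrier_mat (k*2) (k*2)" and v: "v \<in> carrier_vec (k*2)"
  shows "braket v (X *\<^sub>v v) = (\<Sum>i<k. \<Sum>i'<k. braket (vec_block v i) (block2 X i i' *\<^sub>v vec_block v i'))"
proof -
  have "braket v (X *\<^sub>v v) = (\<Sum>r\<in>{0..<k*2}. \<Sum>c\<in>{0..<k*2}. X$$(r,c) * v$c * cnj (v$r))"
    by (rule braket_mult_mat_vec[OF v X])
  also have "\<dots> = (\<Sum>i<k. \<Sum>i'<k. braket (vec_block v i) (block2 X i i' *\<^sub>v vec_block v i'))"
    unfolding double_sum_pairs
    by (intro sum.cong refl)
      (simp add: vec_block_def braket_2 mult_mat_vec_2 block2_def algebra_simps)
  finally show ?thesis .
qed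

lemma block2_id_tensor:
  assumes "i < k" "j < k" and "\<Psi> (block2 M i j) \<in> carrier_mat 2 2"
  shows "block2 (id_tensor k \<Psi> M) i j = \<Psi> (block2 M i j)"
  by (rule eq_matI) (use assms in \<open>auto simp: block2_def id_tensor_index\<close>)

text \<open>w is the product vector sum_i g i |i> (x) |a>.\<close>

lemma braket_product_vector:
  fixes g :: "nat \<Rightarrow> complex"
  assumes M: "M \<in> carrier_mat (k*2) (k*2)" and a: "a \<in> carrier_vec 2"
  defines "w \<equiv> vec (k*2) (\<lambda>m. a$(m mod 2) * g (m div 2))"
  shows "braket w (M *\<^sub>v w) = (\<Sum>i<k. \<Sum>i'<k. sandwich a (block2 M i i') a * cnj (g i) * g i')"
  unfolding braket_blocks[OF M, of w, unfolded w_def, simplified] w_def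
  by (intro sum.cong refl) (use a in \<open>simp add: vec_block_def braket_2 mult_mat_vec_2 sandwich_2 algebra_simps\<close>)

lemma braket_meas_prep:
  "u \<in> carrier_vec 2 \<Longrightarrow> u' \<in> carrier_vec 2 \<Longrightarrow> b \<in> carrier_vec 2 \<Longrightarrow>
   braket u (meas_prep a b B *\<^sub>v u') = sandwich a B a * cnj (braket b u) * braket b u'"
  by (simp add: braket_2 mult_mat_vec_2 meas_prep_index algebra_simps)

text \<open>The quadratic form of (id (x) meas_prep a b) M at v is that of M at a product vector.\<close>

lemma meas_prep_completely_positive:
  assumes a: "a \<in> carrier_vec 2" and b: "b \<in> carrier_vec 2" and M: "psd (k*2) M"
  shows "psd (k*2) (id_tensor k (meas_prep a b) M)"
  unfolding psd_def
proof (intro conjI ballI id_tensor_simps)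
  fix v :: "complex vec" assume v: "v \<in> carrier_vec (k*2)"
  define g where "g i = braket b (vec_block v i)" for i
  define w where "w = vec (k*2) (\<lambda>m. a$(m mod 2) * g (m div 2))"
  have "braket v (id_tensor k (meas_prep a b) M *\<^sub>v v)
      = (\<Sum>i<k. \<Sum>i'<k. sandwich a (block2 M i i') a * cnj (g i) * g i')"
    unfolding braket_blocks[OF id_tensor_simps(1) v]
    by (intro sum.cong refl) (simp add: block2_id_tensor braket_meas_prep b g_def vec_block_def)
  also have "\<dots> = braket w (M *\<^sub>v w)"
    unfolding w_def by (rule braket_product_vector[OF psd_carrier[OF M] a, symmetric])
  also have "0 \<le> braket w (M *\<^sub>v w)" using M unfolding psd_def w_def by auto
  finally show "0 \<le> braket v (id_tensor k (meas_prep a b) M *\<^sub>v v)" .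
qed

lemma id_tensor_measure_prepare:
  "id_tensor k (measure_prepare p e q f) M = id_tensor k (meas_prep p e) M + id_tensor k (meas_prep q f) M"
  by (rule eq_matI) (auto simp: id_tensor_index measure_prepare_def)

lemma measure_prepare_channel:
  assumes p: "unit_vec2 p" and q: "unit_vec2 q" and pq: "braket p q = 0"
    and e: "unit_vec2 e" and f: "unit_vec2 f"
  shows "measure_prepare p e q f \<in> channels"
proof -
  have pc: "p \<in> carrier_vec 2" and qc: "q \<in> carrier_vec 2"
    and "e \<in> carrier_vec 2" "f \<in> carrier_vec 2"
    using p q e f by (auto dest: unit_vec2D)
  then have "completely_positive (measure_prepare p e q f)"
    unfolding completely_positive_def id_tensor_measure_prepare
    by (auto intro!: psd_add meas_prep_completely_positive)
  then show ?thesis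
    unfolding channels_def
    using measure_prepare_linear[OF pc qc] measure_prepare_trace_preserving[OF p q pq e f] by simp
qed

definition block_sandwich :: "complex vec \<Rightarrow> complex mat \<Rightarrow> complex mat" where
  "block_sandwich a M = mat 2 2 (\<lambda>(i,j). sandwich a (block2 M i j) a)"

lemma block_sandwich_simps [simp]:
  "block_sandwich a M \<in> carrier_mat 2 2"
  "dim_row (block_sandwich a M) = 2" "dim_col (block_sandwich a M) = 2"
  unfolding block_sandwich_def by auto

lemma block_sandwich_index:
  "i < 2 \<Longrightarrow> j < 2 \<Longrightarrow> block_sandwich a M $$ (i,j) = sandwich a (block2 M i j) a"
  unfolding block_sandwich_def by simp

lemma block_sandwich_psd:
  assumes a: "a \<in> carrier_vec 2" and M: "psd 4 M"
  shows "psd 2 (block_sandwich a M)"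
  unfolding psd_def
proof (intro conjI ballI block_sandwich_simps)
  fix u :: "complex vec" assume u: "u \<in> carrier_vec 2"
  have Mc: "M \<in> carrier_mat (2*2) (2*2)" using psd_carrier[OF M] by simp
  define w where "w = vec (2*2) (\<lambda>m. a$(m mod 2) * u$(m div 2))"
  have "braket u (block_sandwich a M *\<^sub>v u) = (\<Sum>i<2. \<Sum>i'<2. sandwich a (block2 M i i') a * cnj (u$i) * u$i')"
    using u by (simp add: braket_2 mult_mat_vec_2 sum_lessThan_2 block_sandwich_index algebra_simps)
  also have "\<dots> = braket w (M *\<^sub>v w)"
    unfolding w_def by (rule braket_product_vector[OF Mc a, symmetric])
  also have "0 \<le> braket w (M *\<^sub>v w)" using M unfolding psd_def w_def by auto
  finally show "0 \<le> braket u (block_sandwich a M *\<^sub>v u)" .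
qed

lemma mtrace_block_sandwich_onb:
  assumes p: "unit_vec2 p" and q: "unit_vec2 q" and pq: "braket p q = 0" and \<rho>: "\<rho> \<in> carrier_mat 4 4"
  shows "mtrace (block_sandwich p \<rho>) + mtrace (block_sandwich q \<rho>) = mtrace \<rho>"
proof -
  have diag: "block_sandwich p \<rho> $$ (i,i) + block_sandwich q \<rho> $$ (i,i) = \<rho> $$ (2*i, 2*i) + \<rho> $$ (2*i+1, 2*i+1)"
    if "i < 2" for i
    using that sandwich_onb_sum[OF p q pq block2_simps(1)]
    by (simp add: block_sandwich_index mtrace_2 block2_def)
  have "mtrace \<rho> = \<rho>$$(0,0) + \<rho>$$(1,1) + \<rho>$$(2,2) + \<rho>$$(3,3)"
    unfolding mtrace_def using \<rho> by (simp add: numeral_eq_Suc)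
  with diag[of 0] diag[of 1] show ?thesis
    unfolding mtrace_2[OF block_sandwich_simps(1)]
    by (simp add: numeral_2_eq_2 numeral_3_eq_3 algebra_simps)
qed

lemma psd2_eq_smult_density:
  assumes \<sigma>: "psd 2 \<sigma>"
  obtains t :: real and A where "0 \<le> t" "density 2 A" "\<sigma> = of_real t \<cdot>\<^sub>m A"
proof (cases "mtrace \<sigma> = 0")
  case True
  have "\<sigma> = 0 \<cdot>\<^sub>m ketbra (v2 1 0) (v2 1 0)"
    using psd2_mtrace_zero[OF \<sigma> True] by (auto simp: ketbra_def)
  then show ?thesis
    using that[of 0] ketbra_density[OF unit_vec2_v2[of 1 0]] by simp
next
  case False
  have \<sigma>c: "\<sigma> \<in> carrier_mat 2 2" using \<sigma> by (rule psd_carrier)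
  have "0 \<le> mtrace \<sigma>"
    using psd2_diag_nonneg[OF \<sigma>] by (simp add: mtrace_2[OF \<sigma>c])
  define t where "t = Re (mtrace \<sigma>)"
  have t: "mtrace \<sigma> = of_real t" "0 < t"
    using \<open>0 \<le> mtrace \<sigma>\<close> False by (auto simp: t_def less_eq_complex_def complex_eq_iff)
  have "psd 2 (of_real (1 / t) \<cdot>\<^sub>m \<sigma>)"
    by (rule psd_smult[OF \<sigma>]) (use t in \<open>simp add: less_eq_complex_def\<close>)
  moreover have "mtrace (of_real (1 / t) \<cdot>\<^sub>m \<sigma>) = 1"
    using t \<sigma>c by (simp add: mtrace_2 add_divide_distrib[symmetric])
  moreover have "\<sigma> = of_real t \<cdot>\<^sub>m (of_real (1 / t) \<cdot>\<^sub>m \<sigma>)"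
    by (rule eq_matI) (use t \<sigma>c in auto)
  ultimately show ?thesis
    using that[of t] t unfolding density_def by simp
qed

lemma separable_two_products:
  assumes t: "0 \<le> t0" "0 \<le> t1" "t0 + t1 = 1"
    and dens: "density 2 A0" "density 2 B0" "density 2 A1" "density 2 B1"
  shows "separable (mat 4 4 (\<lambda>(i,j). kron2 (of_real t0 \<cdot>\<^sub>m A0) B0 $$ (i,j) + kron2 (of_real t1 \<cdot>\<^sub>m A1) B1 $$ (i,j)))"
  unfolding separable_def
proof (intro exI conjI allI impI)
  let ?p = "\<lambda>x::nat. if x = 0 then t0 else t1"
  let ?A = "\<lambda>x::nat. if x = 0 then A0 else A1"
  let ?B = "\<lambda>x::nat. if x = 0 then B0 else B1"
  show "0 \<le> ?p x" "density 2 (?A x)" "density 2 (?B x)" for x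
    using t dens by auto
  show "(\<Sum>x<2. ?p x) = 1" using t by (simp add: sum_lessThan_2)
  have "A0 \<in> carrier_mat 2 2" "A1 \<in> carrier_mat 2 2"
    using dens unfolding density_def by (auto dest: psd_carrier)
  then show "mat 4 4 (\<lambda>(i,j). kron2 (of_real t0 \<cdot>\<^sub>m A0) B0 $$ (i,j) + kron2 (of_real t1 \<cdot>\<^sub>m A1) B1 $$ (i,j))
      = mat 4 4 (\<lambda>(i,j). \<Sum>x<2. of_real (?p x) * kron2 (?A x) (?B x) $$ (i,j))"
    by (intro eq_matI) (auto simp: sum_lessThan_2 kron2_def less_mult_imp_div_less mult.assoc)
qed

lemma id_tensor_measure_prepare_2:
  assumes "e \<in> carrier_vec 2" "f \<in> carrier_vec 2"
  shows "id_tensor 2 (measure_prepare p e q f) \<rho> = mat 4 4 (\<lambda>(i,j).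
    kron2 (block_sandwich p \<rho>) (ketbra e e) $$ (i,j) + kron2 (block_sandwich q \<rho>) (ketbra f f) $$ (i,j))"
proof (rule eq_matI)
  fix r c assume "r < dim_row (mat 4 4 (\<lambda>(i,j).
    kron2 (block_sandwich p \<rho>) (ketbra e e) $$ (i,j) + kron2 (block_sandwich q \<rho>) (ketbra f f) $$ (i,j)))"
    "c < dim_col (mat 4 4 (\<lambda>(i,j).
    kron2 (block_sandwich p \<rho>) (ketbra e e) $$ (i,j) + kron2 (block_sandwich q \<rho>) (ketbra f f) $$ (i,j)))"
  then have "r < 4" "c < 4" by simp_all
  moreover from this have "r div 2 < 2" "c div 2 < 2" "r mod 2 < 2" "c mod 2 < 2" by auto
  ultimately show "id_tensor 2 (measure_prepare p e q f) \<rho> $$ (r,c) = mat 4 4 (\<lambda>(i,j).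
    kron2 (block_sandwich p \<rho>) (ketbra e e) $$ (i,j) + kron2 (block_sandwich q \<rho>) (ketbra f f) $$ (i,j)) $$ (r,c)"
    using assms
    by (simp add: id_tensor_index measure_prepare_index block_sandwich_index kron2_def ketbra_index)
qed simp_all

lemma measure_prepare_ent_breaking:
  assumes p: "unit_vec2 p" and q: "unit_vec2 q" and pq: "braket p q = 0"
    and e: "unit_vec2 e" and f: "unit_vec2 f"
  shows "measure_prepare p e q f \<in> ent_breaking"
  unfolding ent_breaking_def
proof (intro CollectI conjI allI impI measure_prepare_channel[OF p q pq e f])
  fix \<rho> assume \<rho>: "density 4 \<rho>"
  have pc: "p \<in> carrier_vec 2" and qc: "q \<in> carrier_vec 2"
    and ec: "e \<in> carrier_vec 2" and fc: "f \<in> carrier_vec 2"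
    using p q e f by (auto dest: unit_vec2D)
  have \<rho>psd: "psd 4 \<rho>" and \<rho>1: "mtrace \<rho> = 1" using \<rho> unfolding density_def by auto
  obtain t0 A0 where t0: "0 \<le> t0" "density 2 A0" "block_sandwich p \<rho> = of_real t0 \<cdot>\<^sub>m A0"
    using psd2_eq_smult_density[OF block_sandwich_psd[OF pc \<rho>psd]] .
  obtain t1 A1 where t1: "0 \<le> t1" "density 2 A1" "block_sandwich q \<rho> = of_real t1 \<cdot>\<^sub>m A1"
    using psd2_eq_smult_density[OF block_sandwich_psd[OF qc \<rho>psd]] .
  have "mtrace A0 = 1" "mtrace A1 = 1" "A0 \<in> carrier_mat 2 2" "A1 \<in> carrier_mat 2 2"
    using t0 t1 unfolding density_def by (auto dest: psd_carrier)
  then have "of_real (t0 + t1) = mtrace (block_sandwich p \<rho>) + mtrace (block_sandwich q \<rho>)"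
    unfolding t0(3) t1(3) by (simp add: mtrace_2 distrib_left[symmetric])
  also have "\<dots> = 1"
    using mtrace_block_sandwich_onb[OF p q pq psd_carrier[OF \<rho>psd]] \<rho>1 by simp
  finally have "t0 + t1 = 1" by (simp only: of_real_eq_1_iff)
  then show "separable (id_tensor 2 (measure_prepare p e q f) \<rho>)"
    unfolding id_tensor_measure_prepare_2[OF ec fc] t0(3) t1(3)
    using separable_two_products t0 t1 ketbra_density[OF e] ketbra_density[OF f] by simp
qed

section \<open>Random unitary channels\<close>

lemma mat_adjoint_carrier: "A \<in> carrier_mat m n \<Longrightarrow> mat_adjoint A \<in> carrier_mat n m"
  unfolding mat_adjoint_def by (simp add: mat_of_rows_def)

lemma mat_adjoint_dim [simp]:
  "dim_row (mat_adjoint A) = dim_col A" "dim_col (mat_adjoint A) = dim_row A"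
  unfolding mat_adjoint_def by (simp_all add: mat_of_rows_def)

lemma mat_adjoint_index:
  "i < dim_col A \<Longrightarrow> j < dim_row A \<Longrightarrow> mat_adjoint A $$ (i,j) = cnj (A $$ (j,i))"
  unfolding mat_adjoint_def by (simp add: mat_of_rows_def)

lemma braket_mult_mat_vec_adjoint_2:
  "U \<in> carrier_mat 2 2 \<Longrightarrow> v \<in> carrier_vec 2 \<Longrightarrow> w \<in> carrier_vec 2 \<Longrightarrow>
   braket v (U *\<^sub>v w) = braket (mat_adjoint U *\<^sub>v v) w"
  by (simp add: braket_2 mult_mat_vec_2 mat_adjoint_carrier mat_adjoint_index carrier_matD algebra_simps)

lemma psd_congruence_2:
  assumes U: "U \<in> carrier_mat 2 2" and M: "psd 2 M"
  shows "psd 2 (U * M * mat_adjoint U)"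
  unfolding psd_def
proof (intro conjI ballI)
  have Mc: "M \<in> carrier_mat 2 2" using M by (rule psd_carrier)
  have aU: "mat_adjoint U \<in> carrier_mat 2 2" using U by (rule mat_adjoint_carrier)
  show "U * M * mat_adjoint U \<in> carrier_mat 2 2" using U Mc aU by simp
  fix v :: "complex vec" assume v: "v \<in> carrier_vec 2"
  let ?w = "mat_adjoint U *\<^sub>v v"
  have w: "?w \<in> carrier_vec 2" using aU v by simp
  have "(U * M * mat_adjoint U) *\<^sub>v v = (U * M) *\<^sub>v ?w"
    by (rule assoc_mult_mat_vec) (use U Mc aU v in auto)
  also have "\<dots> = U *\<^sub>v (M *\<^sub>v ?w)"
    by (rule assoc_mult_mat_vec) (use U Mc w in auto)
  finally have "braket v ((U * M * mat_adjoint U) *\<^sub>v v) = braket v (U *\<^sub>v (M *\<^sub>v ?w))"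
    by simp
  also have "\<dots> = braket ?w (M *\<^sub>v ?w)"
    using braket_mult_mat_vec_adjoint_2[OF U v] Mc w by simp
  also have "0 \<le> \<dots>" using M w unfolding psd_def by blast
  finally show "0 \<le> braket v ((U * M * mat_adjoint U) *\<^sub>v v)" .
qed

lemma mtrace_mult_comm_2:
  "A \<in> carrier_mat 2 2 \<Longrightarrow> B \<in> carrier_mat 2 2 \<Longrightarrow> mtrace (A * B) = mtrace (B * A)"
  by (simp add: mtrace_2 scalar_prod_def sum_atLeast0_lessThan_2 algebra_simps)

lemma unitary2_adjoint_mult: "unitary2 U \<Longrightarrow> mat_adjoint U * U = 1\<^sub>m 2"
  unfolding unitary2_def by (metis mat_adjoint_carrier mat_mult_left_right_inverse)

lemma mtrace_unitary_conj:
  assumes U: "unitary2 U" and A: "A \<in> carrier_mat 2 2"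
  shows "mtrace (U * A * mat_adjoint U) = mtrace A"
proof -
  have Uc: "U \<in> carrier_mat 2 2" using U unfolding unitary2_def by simp
  have aU: "mat_adjoint U \<in> carrier_mat 2 2" using Uc by (rule mat_adjoint_carrier)
  have "mtrace (U * A * mat_adjoint U) = mtrace (mat_adjoint U * (U * A))"
    by (rule mtrace_mult_comm_2) (use Uc A aU in auto)
  also have "mat_adjoint U * (U * A) = (mat_adjoint U * U) * A"
    by (rule assoc_mult_mat[symmetric]) (use Uc A aU in auto)
  finally show ?thesis
    using unitary2_adjoint_mult[OF U] A by simp
qed

lemma braket_weighted_sum_2:
  assumes T: "\<And>x. x < n \<Longrightarrow> T x \<in> carrier_mat 2 2" and v: "v \<in> carrier_vec 2"
  shows "braket v (mat 2 2 (\<lambda>(i,j). \<Sum>x<n. c x * T x $$ (i,j)) *\<^sub>v v)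
       = (\<Sum>x<n. c x * braket v (T x *\<^sub>v v))"
proof -
  have "(\<Sum>x<n. c x * braket v (T x *\<^sub>v v))
      = (\<Sum>x<n. c x * (cnj (v$0) * (T x $$ (0,0) * v$0 + T x $$ (0,1) * v$1)
                     + cnj (v$1) * (T x $$ (1,0) * v$0 + T x $$ (1,1) * v$1)))"
    using T v by (intro sum.cong) (simp_all add: braket_2 mult_mat_vec_2)
  then show ?thesis
    using v by (simp add: braket_2 mult_mat_vec_2 sum_distrib_left sum_distrib_right sum.distrib algebra_simps)
qed

lemma mtrace_weighted_sum_2:
  assumes T: "\<And>x. x < n \<Longrightarrow> T x \<in> carrier_mat 2 2"
  shows "mtrace (mat 2 2 (\<lambda>(i,j). \<Sum>x<n. c x * T x $$ (i,j))) = (\<Sum>x<n. c x * mtrace (T x))"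
proof -
  have "(\<Sum>x<n. c x * mtrace (T x)) = (\<Sum>x<n. c x * T x $$ (0,0) + c x * T x $$ (1,1))"
    using T by (intro sum.cong) (simp_all add: mtrace_2 distrib_left)
  then show ?thesis by (simp add: mtrace_2 sum.distrib)
qed

lemma random_unitary_cases:
  assumes "\<Psi> \<in> random_unitary"
  obtains n and p :: "nat \<Rightarrow> real" and U where
    "\<And>x. x < n \<Longrightarrow> 0 \<le> p x" "\<And>x. x < n \<Longrightarrow> unitary2 (U x)" "(\<Sum>x<n. p x) = 1"
    "\<And>A. A \<in> carrier_mat 2 2 \<Longrightarrow>
       \<Psi> A = mat 2 2 (\<lambda>(i,j). \<Sum>x<n. complex_of_real (p x) * (U x * A * mat_adjoint (U x)) $$ (i,j))"
  using assms unfolding random_unitary_def by blast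

lemma random_unitary_linear: "\<Psi> \<in> random_unitary \<Longrightarrow> linear_map2 \<Psi>"
proof (erule random_unitary_cases)
  fix n and p :: "nat \<Rightarrow> real" and U
  assume U: "\<And>x. x < n \<Longrightarrow> unitary2 (U x)"
    and \<Psi>: "\<And>A. A \<in> carrier_mat 2 2 \<Longrightarrow>
       \<Psi> A = mat 2 2 (\<lambda>(i,j). \<Sum>x<n. complex_of_real (p x) * (U x * A * mat_adjoint (U x)) $$ (i,j))"
  have Uc: "U x \<in> carrier_mat 2 2" "mat_adjoint (U x) \<in> carrier_mat 2 2" if "x < n" for x
    using U[OF that] unfolding unitary2_def by (auto intro: mat_adjoint_carrier)
  show "linear_map2 \<Psi>"
    unfolding linear_map2_def
  proof (intro conjI ballI allI)
    fix A B :: "complex mat" and c :: complex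
    assume A: "A \<in> carrier_mat 2 2" and B: "B \<in> carrier_mat 2 2"
    show "\<Psi> A \<in> carrier_mat 2 2" using \<Psi>[OF A] by simp
    show "\<Psi> (A + B) = \<Psi> A + \<Psi> B"
    proof (rule eq_matI)
      fix i j assume "i < dim_row (\<Psi> A + \<Psi> B)" "j < dim_col (\<Psi> A + \<Psi> B)"
      then have ij: "i < 2" "j < 2" using \<Psi>[OF B] by simp_all
      have "(U x * (A + B) * mat_adjoint (U x)) $$ (i,j)
          = (U x * A * mat_adjoint (U x)) $$ (i,j) + (U x * B * mat_adjoint (U x)) $$ (i,j)" if "x < n" for x
        using ij Uc[OF that] A B by (simp add: mult_add_distrib_mat add_mult_distrib_mat[of _ 2 2])
      then show "\<Psi> (A + B) $$ (i,j) = (\<Psi> A + \<Psi> B) $$ (i,j)"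
        using ij A B by (simp add: \<Psi> distrib_left sum.distrib)
    qed (use A B \<Psi> in simp_all)
    show "\<Psi> (c \<cdot>\<^sub>m A) = c \<cdot>\<^sub>m \<Psi> A"
    proof (rule eq_matI)
      fix i j assume "i < dim_row (c \<cdot>\<^sub>m \<Psi> A)" "j < dim_col (c \<cdot>\<^sub>m \<Psi> A)"
      then have ij: "i < 2" "j < 2" using \<Psi>[OF A] by simp_all
      have "(U x * (c \<cdot>\<^sub>m A) * mat_adjoint (U x)) $$ (i,j) = c * (U x * A * mat_adjoint (U x)) $$ (i,j)"
        if "x < n" for x
        using ij Uc[OF that] A by (simp add: mult_smult_distrib mult_smult_assoc_mat[of _ 2 2])
      then show "\<Psi> (c \<cdot>\<^sub>m A) $$ (i,j) = (c \<cdot>\<^sub>m \<Psi> A) $$ (i,j)"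
        using ij A by (simp add: \<Psi> sum_distrib_left mult_ac)
    qed (use A \<Psi> in simp_all)
  qed
qed

lemma random_unitary_positive: "\<Psi> \<in> random_unitary \<Longrightarrow> positive_map2 \<Psi>"
proof (erule random_unitary_cases)
  fix n and p :: "nat \<Rightarrow> real" and U
  assume p: "\<And>x. x < n \<Longrightarrow> 0 \<le> p x" and U: "\<And>x. x < n \<Longrightarrow> unitary2 (U x)"
    and \<Psi>: "\<And>A. A \<in> carrier_mat 2 2 \<Longrightarrow>
       \<Psi> A = mat 2 2 (\<lambda>(i,j). \<Sum>x<n. complex_of_real (p x) * (U x * A * mat_adjoint (U x)) $$ (i,j))"
  have Uc: "U x \<in> carrier_mat 2 2" if "x < n" for x
    using U[OF that] unfolding unitary2_def by simp
  show "positive_map2 \<Psi>"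
    unfolding positive_map2_def
  proof (intro allI impI)
    fix M assume M: "psd 2 M"
    have conj: "psd 2 (U x * M * mat_adjoint (U x))" if "x < n" for x
      using psd_congruence_2[OF Uc[OF that] M] .
    show "psd 2 (\<Psi> M)"
      unfolding psd_def
    proof (intro conjI ballI)
      show "\<Psi> M \<in> carrier_mat 2 2" using \<Psi>[OF psd_carrier[OF M]] by simp
      fix v :: "complex vec" assume v: "v \<in> carrier_vec 2"
      have "braket v (\<Psi> M *\<^sub>v v) = (\<Sum>x<n. of_real (p x) * braket v ((U x * M * mat_adjoint (U x)) *\<^sub>v v))"
        unfolding \<Psi>[OF psd_carrier[OF M]] using conj v by (intro braket_weighted_sum_2) (auto dest: psd_carrier)
      also have "0 \<le> \<dots>"
        using p conj v by (intro sum_nonneg mult_nonneg_nonneg) (auto simp: psd_def less_eq_complex_def)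
      finally show "0 \<le> braket v (\<Psi> M *\<^sub>v v)" .
    qed
  qed
qed

lemma random_unitary_trace_preserving: "\<Psi> \<in> random_unitary \<Longrightarrow> trace_preserving \<Psi>"
proof (erule random_unitary_cases)
  fix n and p :: "nat \<Rightarrow> real" and U
  assume U: "\<And>x. x < n \<Longrightarrow> unitary2 (U x)" and p1: "(\<Sum>x<n. p x) = 1"
    and \<Psi>: "\<And>A. A \<in> carrier_mat 2 2 \<Longrightarrow>
       \<Psi> A = mat 2 2 (\<lambda>(i,j). \<Sum>x<n. complex_of_real (p x) * (U x * A * mat_adjoint (U x)) $$ (i,j))"
  show "trace_preserving \<Psi>"
    unfolding trace_preserving_def
  proof
    fix A :: "complex mat" assume A: "A \<in> carrier_mat 2 2"
    have Uc: "U x * A * mat_adjoint (U x) \<in> carrier_mat 2 2" if "x < n" for x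
      using U[OF that] A unfolding unitary2_def by (auto intro!: mult_carrier_mat mat_adjoint_carrier)
    have "mtrace (\<Psi> A) = (\<Sum>x<n. of_real (p x) * mtrace (U x * A * mat_adjoint (U x)))"
      unfolding \<Psi>[OF A] using Uc by (rule mtrace_weighted_sum_2)
    also have "\<dots> = (\<Sum>x<n. of_real (p x) * mtrace A)"
      using mtrace_unitary_conj[OF U A] by simp
    also have "\<dots> = mtrace A"
      using p1 by (simp flip: sum_distrib_right of_real_sum)
    finally show "mtrace (\<Psi> A) = mtrace A" .
  qed
qed

definition basis_map :: "complex vec \<Rightarrow> complex vec \<Rightarrow> complex vec \<Rightarrow> complex vec \<Rightarrow> complex \<Rightarrow> complex mat" where
  "basis_map p e q f s = mat 2 2 (\<lambda>(i,j). e$i * cnj (p$j) + s * (f$i * cnj (q$j)))"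

lemma basis_map_simps [simp]:
  "basis_map p e q f s \<in> carrier_mat 2 2"
  "dim_row (basis_map p e q f s) = 2" "dim_col (basis_map p e q f s) = 2"
  unfolding basis_map_def by auto

lemma basis_map_index:
  "i < 2 \<Longrightarrow> j < 2 \<Longrightarrow> basis_map p e q f s $$ (i,j) = e$i * cnj (p$j) + s * (f$i * cnj (q$j))"
  unfolding basis_map_def by simp

lemma basis_map_conj_index:
  assumes p: "p \<in> carrier_vec 2" and q: "q \<in> carrier_vec 2" and A: "A \<in> carrier_mat 2 2"
    and ij: "i < 2" "j < 2"
  shows "(basis_map p e q f s * A * mat_adjoint (basis_map p e q f s)) $$ (i,j) =
    e$i * cnj (e$j) * sandwich p A p + s * cnj s * (f$i * cnj (f$j)) * sandwich q A q
    + cnj s * (e$i * cnj (f$j)) * sandwich p A q + s * (f$i * cnj (e$j)) * sandwich q A p"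
  using assms
  by (simp add: scalar_prod_def sum_atLeast0_lessThan_2 mat_adjoint_carrier mat_adjoint_index
      basis_map_index sandwich_2 algebra_simps)

lemma basis_map_unitary:
  assumes p: "unit_vec2 p" and q: "unit_vec2 q" and pq: "braket p q = 0"
    and e: "unit_vec2 e" and f: "unit_vec2 f" and ef: "braket e f = 0" and s: "s * cnj s = 1"
  shows "unitary2 (basis_map p e q f s)"
  unfolding unitary2_def
proof (intro conjI basis_map_simps(1) eq_matI)
  have pc: "p \<in> carrier_vec 2" and qc: "q \<in> carrier_vec 2" using p q by (auto dest: unit_vec2D)
  have qp: "braket q p = 0" using braket_swap[OF pc qc] pq by simp
  fix i j assume "i < dim_row (1\<^sub>m 2 :: complex mat)" "j < dim_col (1\<^sub>m 2 :: complex mat)"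
  then have ij: "i < 2" "j < 2" by simp_all
  have "(basis_map p e q f s * mat_adjoint (basis_map p e q f s)) $$ (i,j)
      = e$i * cnj (e$j) * braket p p + s * cnj s * (f$i * cnj (f$j)) * braket q q
        + cnj s * (e$i * cnj (f$j)) * braket p q + s * (f$i * cnj (e$j)) * braket q p"
    using ij pc qc by (simp add: scalar_prod_def sum_atLeast0_lessThan_2 mat_adjoint_carrier
        mat_adjoint_index basis_map_index braket_2 algebra_simps)
  also have "\<dots> = (1\<^sub>m 2 :: complex mat) $$ (i,j)"
    using onb_resolution_of_identity[OF e f ef ij] braket_self_unit[OF p] braket_self_unit[OF q] pq qp s
    by simp
  finally show "(basis_map p e q f s * mat_adjoint (basis_map p e q f s)) $$ (i,j) = (1\<^sub>m 2 :: complex mat) $$ (i,j)" .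
qed (simp_all add: mat_adjoint_carrier)

text \<open>The cross terms cancel in the average over the signs s = 1 and s = -1.\<close>

lemma measure_prepare_random_unitary:
  assumes p: "unit_vec2 p" and q: "unit_vec2 q" and pq: "braket p q = 0"
    and e: "unit_vec2 e" and f: "unit_vec2 f" and ef: "braket e f = 0"
  shows "measure_prepare p e q f \<in> random_unitary"
proof -
  have pc: "p \<in> carrier_vec 2" and qc: "q \<in> carrier_vec 2" using p q by (auto dest: unit_vec2D)
  define U where "U x = basis_map p e q f (if x = 0 then 1 else -1)" for x :: nat
  have "measure_prepare p e q f A
      = mat 2 2 (\<lambda>(i,j). \<Sum>x<2. complex_of_real (1/2) * (U x * A * mat_adjoint (U x)) $$ (i,j))"
    if A: "A \<in> carrier_mat 2 2" for A
  proof (rule eq_matI)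
    fix i j assume "i < dim_row (mat 2 2 (\<lambda>(i,j). \<Sum>x<2. complex_of_real (1/2) * (U x * A * mat_adjoint (U x)) $$ (i,j)))"
      "j < dim_col (mat 2 2 (\<lambda>(i,j). \<Sum>x<2. complex_of_real (1/2) * (U x * A * mat_adjoint (U x)) $$ (i,j)))"
    then have ij: "i < 2" "j < 2" by simp_all
    then show "measure_prepare p e q f A $$ (i,j)
      = mat 2 2 (\<lambda>(i,j). \<Sum>x<2. complex_of_real (1/2) * (U x * A * mat_adjoint (U x)) $$ (i,j)) $$ (i,j)"
      by (simp add: sum_lessThan_2 U_def basis_map_conj_index[OF pc qc A ij] measure_prepare_index
          field_simps)
  qed simp_all
  moreover have "unitary2 (U x)" for x
    unfolding U_def by (rule basis_map_unitary[OF p q pq e f ef]) simp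
  ultimately show ?thesis
    unfolding random_unitary_def
    by (intro CollectI exI[of _ 2] exI[of _ "\<lambda>_. 1/2"] exI[of _ U]) (simp add: sum_lessThan_2)
qed

lemma discrimination_optimum_attained:
  assumes psi: "unit_vec2 \<psi>" and phi: "unit_vec2 \<phi>" and e: "unit_vec2 e" and f: "unit_vec2 f"
    and ef: "braket e f = 0"
  obtains \<Psi> where "\<Psi> \<in> random_unitary" "\<Psi> \<in> ent_breaking" "\<Psi> (1\<^sub>m 2) = 1\<^sub>m 2"
    "discr_obj \<psi> \<phi> e f \<Psi> = of_real ((1 + sqrt (1 - (cmod (braket \<psi> \<phi>))\<^sup>2)) / 2)"
proof -
  define l where "l = sqrt (1 - (cmod (braket \<psi> \<phi>))\<^sup>2)"
  obtain x y where D: "ketbra \<psi> \<psi> - ketbra \<phi> \<phi> = mat2 (of_real x) y (cnj y) (- of_real x)"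
    and xy: "x\<^sup>2 + (cmod y)\<^sup>2 = 1 - (cmod (braket \<psi> \<phi>))\<^sup>2"
    using ketbra_diff_traceless[OF psi phi] .
  have l2: "x\<^sup>2 + (cmod y)\<^sup>2 = l\<^sup>2" and "0 \<le> l"
    using xy cmod_braket_unit_le_1[OF psi phi] by (simp_all add: l_def)
  obtain a b where ab: "a * cnj a + b * cnj b = 1"
    and eig: "sandwich (v2 a b) (mat2 (of_real x) y (cnj y) (- of_real x)) (v2 a b) = of_real l"
    using traceless_hermitian_top_eigenvector[OF l2 \<open>0 \<le> l\<close>] .
  define p where "p = v2 a b"
  define q where "q = v2 (- cnj b) (cnj a)"
  have p: "unit_vec2 p" and q: "unit_vec2 q" and pq: "braket p q = 0"
    unfolding p_def q_def using ab by (auto intro!: unit_vec2_v2 simp: braket_2 algebra_simps)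
  have "discr_obj \<psi> \<phi> e f (measure_prepare p e q f)
      = (1 + sandwich p (mat2 (of_real x) y (cnj y) (- of_real x)) p) / 2"
    unfolding discr_obj_measure_prepare[OF psi phi p q pq e f ef] D ..
  also have "\<dots> = of_real ((1 + l) / 2)"
    unfolding p_def eig by simp
  finally show ?thesis
    using that measure_prepare_random_unitary[OF p q pq e f ef] measure_prepare_ent_breaking[OF p q pq e f]
      measure_prepare_unital[OF p q e f ef] unfolding l_def by blast
qed

theorem proposition10:
  fixes \<psi> \<phi> e f :: "complex vec"
  assumes "unit_vec2 \<psi>" and "unit_vec2 \<phi>" and "unit_vec2 e" and "unit_vec2 f"
    and "braket e f = 0"
  shows "\<forall>X \<in> {random_unitary, unital_ent_breaking, ent_breaking, channels}.
     (\<exists>\<Psi> \<in> X. discr_obj \<psi> \<phi> e f \<Psi> =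
         complex_of_real ((1 + sqrt (1 - (cmod (braket \<psi> \<phi>))\<^sup>2)) / 2)) \<and>
     (\<forall>\<Psi> \<in> X. discr_obj \<psi> \<phi> e f \<Psi> \<le>
         complex_of_real ((1 + sqrt (1 - (cmod (braket \<psi> \<phi>))\<^sup>2)) / 2))"
proof -
  obtain \<Psi>\<^sub>0 where "\<Psi>\<^sub>0 \<in> random_unitary" "\<Psi>\<^sub>0 \<in> ent_breaking" "\<Psi>\<^sub>0 (1\<^sub>m 2) = 1\<^sub>m 2"
    and optimal: "discr_obj \<psi> \<phi> e f \<Psi>\<^sub>0 = of_real ((1 + sqrt (1 - (cmod (braket \<psi> \<phi>))\<^sup>2)) / 2)"
    using discrimination_optimum_attained[OF assms] .
  then have attained: "\<Psi>\<^sub>0 \<in> X" if "X \<in> {random_unitary, unital_ent_breaking, ent_breaking, channels}" for X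
    using that unfolding unital_ent_breaking_def ent_breaking_def by auto
  have bounded: "discr_obj \<psi> \<phi> e f \<Psi> \<le> of_real ((1 + sqrt (1 - (cmod (braket \<psi> \<phi>))\<^sup>2)) / 2)"
    if "\<Psi> \<in> X" "X \<in> {random_unitary, unital_ent_breaking, ent_breaking, channels}" for \<Psi> X
  proof -
    have "\<Psi> \<in> random_unitary \<or> \<Psi> \<in> channels"
      using that unfolding unital_ent_breaking_def ent_breaking_def by auto
    then have "linear_map2 \<Psi>" "positive_map2 \<Psi>" "trace_preserving \<Psi>"
      using random_unitary_linear random_unitary_positive random_unitary_trace_preserving
        channel_positive unfolding channels_def by blast+
    then show ?thesis by (rule discrimination_upper_bound[OF assms])
  qed
  show ?thesis using optimal attained bounded by blast
qed

end
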